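(* Let $W:\Omega^2\to[0,1]$ be a graphon and $F$ a graph on vertex set $[k]$. Suppose that $\mathfrak{c}:\Omega\to[0,1]$ is a fractional $F$-cover of $W$ and that $\mathfrak{t}:\Omega^k\to[0,1]$ is an $F$-tiling in $W$. Then $\|\mathfrak{t}\|\le\|\mathfrak{c}\|$.
   Context: $(\Omega,\nu)$ is an atomless Borel probability space; a graphon is a symmetric measurable $W:\Omega^2\to[0,1]$. $W^{\otimes F}(x_1,\dots,x_k)=\prod_{ij\in E(F),i<j}W(x_i,x_j)$ and $\mathcal{F}_F(W)=\{W^{\otimes F}\neq0\}$. An $F$-tiling in $W$ is a measurable $\mathfrak{t}:\Omega^k\to[0,\infty)$ with $\{\mathfrak{t}\neq0\}\subset\mathcal{F}_F(W)$ such that for each $x\in\Omega$, $\sum_{\ell=1}^k\int\mathfrak{t}(x_1,\dots,x_{\ell-1},x,x_{\ell+1},\dots,x_k)\,\mathrm{d}\nu^{k-1}\le1$ (integrating over all coordinates except the $\ell$-th); its size is $\|\mathfrak{t}\|=\int\mathfrak{t}\,\mathrm{d}\nu^k$. A fractional $F$-cover of $W$ is a measurable $\mathfrak{c}:\Omega\to[0,1]$ with $\nu^k\big(\mathcal{F}_F(W)\cap\{(x_1,\dots,x_k):\sum_{i=1}^k\mathfrak{c}(x_i)<1\}\big)=0$; its size is $\|\mathfrak{c}\|=\int\mathfrak{c}\,\mathrm{d}\nu$. *)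

theory Defs
  imports "HOL-Probability.Probability"
begin

definition atomless :: "'a measure \<Rightarrow> bool" where
  "atomless M \<longleftrightarrow> (\<forall>A\<in>sets M. emeasure M A > 0 \<longrightarrow>
      (\<exists>B\<in>sets M. B \<subseteq> A \<and> 0 < emeasure M B \<and> emeasure M B < emeasure M A))"

definition atomless_borel_prob :: "('a::polish_space) measure \<Rightarrow> bool" where
  "atomless_borel_prob M \<longleftrightarrow> prob_space M \<and> sets M = sets borel \<and> atomless M"

definition graphon :: "'a measure \<Rightarrow> ('a \<Rightarrow> 'a \<Rightarrow> real) \<Rightarrow> bool" where
  "graphon M W \<longleftrightarrow> (\<lambda>(x, y). W x y) \<in> borel_measurable (M \<Otimes>\<^sub>M M)
     \<and> (\<forall>x\<in>space M. \<forall>y\<in>space M. W x y = W y x \<and> 0 \<le> W x y \<and> W x y \<le> 1)"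

definition graph_on :: "nat \<Rightarrow> (nat \<times> nat) set \<Rightarrow> bool" where
  "graph_on k F \<longleftrightarrow> F \<subseteq> {(i, j). i < j \<and> j < k}"

abbreviation powM :: "'a measure \<Rightarrow> nat \<Rightarrow> (nat \<Rightarrow> 'a) measure" where
  "powM M k \<equiv> PiM {..<k} (\<lambda>_. M)"

definition tensorF :: "(nat \<times> nat) set \<Rightarrow> ('a \<Rightarrow> 'a \<Rightarrow> real) \<Rightarrow> (nat \<Rightarrow> 'a) \<Rightarrow> real" where
  "tensorF F W x = (\<Prod>(i, j)\<in>F. W (x i) (x j))"

definition copiesF :: "'a measure \<Rightarrow> nat \<Rightarrow> (nat \<times> nat) set \<Rightarrow> ('a \<Rightarrow> 'a \<Rightarrow> real) \<Rightarrow> (nat \<Rightarrow> 'a) set" where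
  "copiesF M k F W = {x \<in> space (powM M k). tensorF F W x \<noteq> 0}"

definition F_tiling :: "'a measure \<Rightarrow> nat \<Rightarrow> (nat \<times> nat) set \<Rightarrow> ('a \<Rightarrow> 'a \<Rightarrow> real)
    \<Rightarrow> ((nat \<Rightarrow> 'a) \<Rightarrow> real) \<Rightarrow> bool" where
  "F_tiling M k F W t \<longleftrightarrow>
     t \<in> borel_measurable (powM M k)
   \<and> (\<forall>x\<in>space (powM M k). 0 \<le> t x)
   \<and> {x \<in> space (powM M k). t x \<noteq> 0} \<subseteq> copiesF M k F W
   \<and> (\<forall>x\<in>space M. (\<Sum>l<k. \<integral>\<^sup>+ y. ennreal (t (y(l := x))) \<partial>(PiM ({..<k} - {l}) (\<lambda>_. M))) \<le> 1)"

definition tiling_size :: "'a measure \<Rightarrow> nat \<Rightarrow> ((nat \<Rightarrow> 'a) \<Rightarrow> real) \<Rightarrow> ennreal" where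
  "tiling_size M k t = (\<integral>\<^sup>+ x. ennreal (t x) \<partial>(powM M k))"

definition frac_F_cover :: "'a measure \<Rightarrow> nat \<Rightarrow> (nat \<times> nat) set \<Rightarrow> ('a \<Rightarrow> 'a \<Rightarrow> real)
    \<Rightarrow> ('a \<Rightarrow> real) \<Rightarrow> bool" where
  "frac_F_cover M k F W c \<longleftrightarrow>
     c \<in> borel_measurable M
   \<and> (\<forall>x\<in>space M. 0 \<le> c x \<and> c x \<le> 1)
   \<and> (AE x in powM M k. tensorF F W x \<noteq> 0 \<longrightarrow> 1 \<le> (\<Sum>i<k. c (x i)))"

definition cover_size :: "'a measure \<Rightarrow> ('a \<Rightarrow> real) \<Rightarrow> ennreal" where
  "cover_size M c = (\<integral>\<^sup>+ x. ennreal (c x) \<partial>M)"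

end

theory Submission
  imports Defs
begin

text \<open>Weight each copy by the cover: on the support of the tiling every copy satisfies
\<open>1 \<le> \<Sum>\<^sub>i c(x\<^sub>i)\<close>, so \<open>\<parallel>t\<parallel> \<le> \<Sum>\<^sub>i \<integral> t(x) c(x\<^sub>i) dx\<close>. By Fubini the \<open>i\<close>-th summand is
\<open>\<integral> c(z) \<cdot> t\<^sub>i(z) dz\<close>, where \<open>t\<^sub>i(z)\<close> integrates \<open>t\<close> over all coordinates except the \<open>i\<close>-th,
which is fixed to \<open>z\<close>. The tiling condition says \<open>\<Sum>\<^sub>i t\<^sub>i(z) \<le> 1\<close>, hence \<open>\<parallel>t\<parallel> \<le> \<integral> c = \<parallel>c\<parallel>\<close>.\<close>

definition coord_slice_integral ::
    "'a measure \<Rightarrow> 'i set \<Rightarrow> 'i \<Rightarrow> (('i \<Rightarrow> 'a) \<Rightarrow> ennreal) \<Rightarrow> 'a \<Rightarrow> ennreal" where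
  "coord_slice_integral M I i f z = (\<integral>\<^sup>+ y. f (y(i := z)) \<partial>PiM (I - {i}) (\<lambda>_. M))"

lemma measurable_coord_slice:
  assumes "finite I" "i \<in> I"
    and f: "f \<in> borel_measurable (PiM I (\<lambda>_. M))"
  shows "(\<lambda>(y, z). f (y(i := z))) \<in> borel_measurable (PiM (I - {i}) (\<lambda>_. M) \<Otimes>\<^sub>M M)"
proof -
  have "f \<in> borel_measurable (PiM (insert i (I - {i})) (\<lambda>_. M))"
    using f \<open>i \<in> I\<close> by (simp add: insert_absorb)
  from measurable_compose[OF measurable_add_dim this] show ?thesis
    by (simp add: case_prod_beta')
qed

lemma borel_measurable_coord_slice_integral:
  assumes "sigma_finite_measure M" "finite I" "i \<in> I"
    and f: "f \<in> borel_measurable (PiM I (\<lambda>_. M))"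
  shows "coord_slice_integral M I i f \<in> borel_measurable M"
proof -
  interpret product_sigma_finite "\<lambda>_. M"
    using assms(1) by (simp add: product_sigma_finite_def)
  interpret PI: sigma_finite_measure "PiM (I - {i}) (\<lambda>_. M)"
    using \<open>finite I\<close> by (intro sigma_finite) simp
  have "(\<lambda>(z, y). f (y(i := z))) \<in> borel_measurable (M \<Otimes>\<^sub>M PiM (I - {i}) (\<lambda>_. M))"
    using measurable_coord_slice[OF assms(2-4)] by measurable
  from PI.borel_measurable_nn_integral[OF this] show ?thesis
    unfolding coord_slice_integral_def .
qed

lemma nn_integral_PiM_mult_coord:
  assumes "sigma_finite_measure M" "finite I" "i \<in> I"
    and f: "f \<in> borel_measurable (PiM I (\<lambda>_. M))" and g: "g \<in> borel_measurable M"
  shows "(\<integral>\<^sup>+ x. f x * g (x i) \<partial>PiM I (\<lambda>_. M))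
       = (\<integral>\<^sup>+ z. g z * coord_slice_integral M I i f z \<partial>M)"
proof -
  interpret product_sigma_finite "\<lambda>_. M"
    using assms(1) by (simp add: product_sigma_finite_def)
  define J where "J = I - {i}"
  have IJ: "I = insert i J" "i \<notin> J" "finite J"
    using assms(2,3) by (auto simp: J_def)
  have f': "f \<in> borel_measurable (PiM (insert i J) (\<lambda>_. M))"
    using f IJ(1) by simp
  have "(\<integral>\<^sup>+ x. f x * g (x i) \<partial>PiM I (\<lambda>_. M))
      = (\<integral>\<^sup>+ z. (\<integral>\<^sup>+ y. f (y(i := z)) * g z \<partial>PiM J (\<lambda>_. M)) \<partial>M)"
    unfolding IJ(1) using f' g
    by (subst product_nn_integral_insert_rev[OF IJ(3,2)]) (simp, measurable)
  also have "\<dots> = (\<integral>\<^sup>+ z. g z * coord_slice_integral M I i f z \<partial>M)"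
  proof (rule nn_integral_cong)
    fix z assume "z \<in> space M"
    then have "(\<lambda>y. f (y(i := z))) \<in> borel_measurable (PiM J (\<lambda>_. M))"
      using f' by measurable
    then show "(\<integral>\<^sup>+ y. f (y(i := z)) * g z \<partial>PiM J (\<lambda>_. M)) = g z * coord_slice_integral M I i f z"
      unfolding coord_slice_integral_def J_def by (simp add: nn_integral_cmult[symmetric] mult.commute)
  qed
  finally show ?thesis .
qed

lemma tiling_le_cover_weighted:
  assumes c: "frac_F_cover M k F W c" and t: "F_tiling M k F W t"
  shows "AE x in powM M k. ennreal (t x) \<le> (\<Sum>i<k. ennreal (t x) * ennreal (c (x i)))"
proof -
  have "AE x in powM M k. tensorF F W x \<noteq> 0 \<longrightarrow> 1 \<le> (\<Sum>i<k. c (x i))"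
    using c by (simp add: frac_F_cover_def)
  with AE_space show ?thesis
  proof eventually_elim
    case (elim x)
    show ?case
    proof (cases "t x = 0")
      case False
      with elim t have "tensorF F W x \<noteq> 0"
        by (auto simp: F_tiling_def copiesF_def)
      with elim have cover: "1 \<le> (\<Sum>i<k. c (x i))" by simp
      have c_nonneg: "\<forall>i<k. 0 \<le> c (x i)"
        using c elim by (auto simp: frac_F_cover_def space_PiM)
      have t_nonneg: "0 \<le> t x"
        using t elim by (simp add: F_tiling_def)
      have "t x \<le> (\<Sum>i<k. t x * c (x i))"
        using mult_left_mono[OF cover t_nonneg] by (simp add: sum_distrib_left)
      then have "ennreal (t x) \<le> ennreal (\<Sum>i<k. t x * c (x i))"
        by (rule ennreal_leI)
      also have "\<dots> = (\<Sum>i<k. ennreal (t x * c (x i)))"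
        by (rule sum_ennreal[symmetric]) (use c_nonneg t_nonneg in auto)
      finally show ?thesis
        using c_nonneg t_nonneg by (simp add: ennreal_mult)
    qed simp
  qed
qed

theorem proposition4p1:
  fixes M :: "('a::polish_space) measure"
    and W :: "'a \<Rightarrow> 'a \<Rightarrow> real"
    and k :: nat and F :: "(nat \<times> nat) set"
    and c :: "'a \<Rightarrow> real" and t :: "(nat \<Rightarrow> 'a) \<Rightarrow> real"
  assumes "atomless_borel_prob M"
    and "graphon M W"
    and "graph_on k F"
    and "frac_F_cover M k F W c"
    and "F_tiling M k F W t"
    and "\<forall>x\<in>space (powM M k). t x \<le> 1"
  shows "tiling_size M k t \<le> cover_size M c"
proof -
  have M: "sigma_finite_measure M"
    using assms(1) by (simp add: atomless_borel_prob_def prob_space_imp_sigma_finite)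
  have cm: "c \<in> borel_measurable M" using assms(4) by (simp add: frac_F_cover_def)
  have tm: "t \<in> borel_measurable (powM M k)" using assms(5) by (simp add: F_tiling_def)
  let ?slice = "\<lambda>i. coord_slice_integral M {..<k} i (\<lambda>x. ennreal (t x))"
  have "tiling_size M k t \<le> (\<integral>\<^sup>+ x. (\<Sum>i<k. ennreal (t x) * ennreal (c (x i))) \<partial>powM M k)"
    unfolding tiling_size_def
    by (rule nn_integral_mono_AE[OF tiling_le_cover_weighted[OF assms(4,5)]])
  also have "\<dots> = (\<Sum>i<k. \<integral>\<^sup>+ x. ennreal (t x) * ennreal (c (x i)) \<partial>powM M k)"
    by (rule nn_integral_sum) (use tm cm in measurable)
  also have "\<dots> = (\<Sum>i<k. \<integral>\<^sup>+ z. ennreal (c z) * ?slice i z \<partial>M)"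
    by (intro sum.cong refl nn_integral_PiM_mult_coord M) (use tm cm in auto)
  also have "\<dots> = (\<integral>\<^sup>+ z. ennreal (c z) * (\<Sum>i<k. ?slice i z) \<partial>M)"
    by (simp add: sum_distrib_left, rule nn_integral_sum[symmetric])
       (use M tm cm borel_measurable_coord_slice_integral[of M "{..<k}" _ "\<lambda>x. ennreal (t x)"] in auto)
  also have "\<dots> \<le> cover_size M c"
    using assms(5) unfolding cover_size_def F_tiling_def coord_slice_integral_def
    by (intro nn_integral_mono) (auto intro: mult_left_le)
  finally show ?thesis .
qed

end
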